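(* Let $G$ be a finite graph with edges labeled $1,\dots,n$, let $\sigma$ be a permutation of $\{1,\dots,n\}$, and let $G_\sigma$ be the same graph with the edge labeled $k$ in $G$ relabeled $\sigma(k)$. Then the chain complexes $\mathcal{C}(G)$ and $\mathcal{C}(G_\sigma)$ are isomorphic (by degree-preserving isomorphisms commuting with the differentials); consequently the cohomology groups $H^i(G)$ are independent of the ordering of the edges and are invariants of the graph.
   Context: Graphs are finite; loops and multiple edges allowed. For $G=(V,E)$ and $s\subseteq E$, $[G:s]$ is the spanning subgraph with edge set $s$. With $1*1=1$, $1*x=x*1=x$, $x*x=0$: an enhanced state is $S=(s,c)$, $s\subseteq E$, $c$ assigning $1$ or $x$ to each component of $[G:s]$; $i(S)=|s|$, $j(S)=$ number of components colored $x$. $C^{i,j}(G)$ is free abelian on enhanced states with $i(S)=i,j(S)=j$; $C^i(G)=\bigoplus_jC^{i,j}(G)$, graded by $j$. For an ordering of the edges, $d(S)=\sum_{e\in E\setminus s}(-1)^{n(e)}S_e$, $n(e)$ the number of edges of $s$ ordered before $e$; $S_e=(s\cup\{e\},c_e)$ where, if $e$ joins a component to itself, colors are unchanged, and if $e$ joins distinct components $E_1,E_2$ the merged component gets $c(E_1)*c(E_2)$ (and $S_e=0$ if this product is $0$). $\mathcal{C}(G)=(C^\bullet(G),d)$, and $H^i(G)$ is its $i$-th cohomology, graded by $j$. *)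

theory Defs
  imports Main "HOL-Combinatorics.Permutations"
begin

text \<open>A finite graph with vertex set V and edges labelled 1..n; edge k has
 endpoints ends k (a pair; loops allowed when both coincide; multiple edges allowed
 since distinct labels may have the same endpoints).\<close>

datatype col = One | X

fun cmult :: "col \<Rightarrow> col \<Rightarrow> col option" where
  "cmult One y = Some y"
| "cmult X One = Some X"
| "cmult X X = None"

type_synonym 'v estate = "nat set \<times> ('v set \<Rightarrow> col)"

definition edge_rel :: "(nat \<Rightarrow> 'v \<times> 'v) \<Rightarrow> nat set \<Rightarrow> ('v \<times> 'v) set" where
  "edge_rel ends s = {ends e | e. e \<in> s}"

definition conn :: "'v set \<Rightarrow> (nat \<Rightarrow> 'v \<times> 'v) \<Rightarrow> nat set \<Rightarrow> ('v \<times> 'v) set" where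
  "conn V ends s = ((edge_rel ends s \<union> (edge_rel ends s)\<inverse>)\<^sup>*) \<inter> (V \<times> V)"

definition comps :: "'v set \<Rightarrow> (nat \<Rightarrow> 'v \<times> 'v) \<Rightarrow> nat set \<Rightarrow> 'v set set" where
  "comps V ends s = V // conn V ends s"

text \<open>enhanced states: s a set of edges, colouring c of the components of [G:s]
 (extended by One outside the components, so that it is determined by its values on them)\<close>
definition states :: "'v set \<Rightarrow> (nat \<Rightarrow> 'v \<times> 'v) \<Rightarrow> nat \<Rightarrow> 'v estate set" where
  "states V ends n = {(s, c). s \<subseteq> {1..n} \<and> (\<forall>C. C \<notin> comps V ends s \<longrightarrow> c C = One)}"

definition ideg :: "'v estate \<Rightarrow> nat" where
  "ideg S = card (fst S)"

definition jdeg :: "'v set \<Rightarrow> (nat \<Rightarrow> 'v \<times> 'v) \<Rightarrow> 'v estate \<Rightarrow> nat" where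
  "jdeg V ends S = card {C \<in> comps V ends (fst S). snd S C = X}"

text \<open>S_e (None represents 0)\<close>
definition Se :: "'v set \<Rightarrow> (nat \<Rightarrow> 'v \<times> 'v) \<Rightarrow> 'v estate \<Rightarrow> nat \<Rightarrow> 'v estate option" where
  "Se V ends S e =
    (let s = fst S; c = snd S; s' = insert e s;
         Ca = conn V ends s `` {fst (ends e)}; Cb = conn V ends s `` {snd (ends e)} in
     if Ca = Cb then Some (s', \<lambda>C. if C \<in> comps V ends s' then c C else One)
     else (case cmult (c Ca) (c Cb) of
             None \<Rightarrow> None
           | Some p \<Rightarrow> Some (s', \<lambda>C. if C = Ca \<union> Cb then p
                                    else if C \<in> comps V ends s' then c C else One)))"

text \<open>chain groups: integer-valued functions on enhanced states (finitely many),
 i.e. elements of the free abelian group on the states\<close>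
definition chains :: "'v set \<Rightarrow> (nat \<Rightarrow> 'v \<times> 'v) \<Rightarrow> nat \<Rightarrow> nat \<Rightarrow> ('v estate \<Rightarrow> int) set" where
  "chains V ends n i = {f. \<forall>S. f S \<noteq> 0 \<longrightarrow> S \<in> states V ends n \<and> ideg S = i}"

definition chains_ij :: "'v set \<Rightarrow> (nat \<Rightarrow> 'v \<times> 'v) \<Rightarrow> nat \<Rightarrow> nat \<Rightarrow> nat \<Rightarrow> ('v estate \<Rightarrow> int) set" where
  "chains_ij V ends n i j =
     {f. \<forall>S. f S \<noteq> 0 \<longrightarrow> S \<in> states V ends n \<and> ideg S = i \<and> jdeg V ends S = j}"

definition dmap :: "'v set \<Rightarrow> (nat \<Rightarrow> 'v \<times> 'v) \<Rightarrow> nat \<Rightarrow> ('v estate \<Rightarrow> int) \<Rightarrow> ('v estate \<Rightarrow> int)" where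
  "dmap V ends n f = (\<lambda>T. \<Sum>S\<in>states V ends n. \<Sum>e\<in>{1..n} - fst S.
      if Se V ends S e = Some T then (-1::int) ^ card {e' \<in> fst S. e' < e} * f S else 0)"

text \<open>G_sigma: the edge labelled k in G gets label sigma k\<close>
definition relabel :: "nat \<Rightarrow> (nat \<Rightarrow> nat) \<Rightarrow> (nat \<Rightarrow> 'v \<times> 'v) \<Rightarrow> (nat \<Rightarrow> 'v \<times> 'v)" where
  "relabel n \<sigma> ends = ends \<circ> inv_into {1..n} \<sigma>"

end

theory Submission
  imports Defs
begin

text \<open>Relabelling maps an enhanced state \<open>(s, c)\<close> to \<open>(\<sigma> s, c)\<close>. The edge labelled
  \<open>\<sigma> e\<close> in \<open>G\<^sub>\<sigma>\<close> is the edge \<open>e\<close> of \<open>G\<close>, so \<open>[G:s]\<close> and \<open>[G\<^sub>\<sigma>:\<sigma> s]\<close> are the same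
  graph: this is a bijection of enhanced states preserving both gradings and compatible with
  \<open>S \<mapsto> S\<^sub>e\<close>. It fails to commute with \<open>d\<close> only through the signs \<open>(-1)\<^bsup>n(e)\<^esup>\<close>, which
  depend on the edge order. Twisting by the parity of the number of inversions of \<open>\<sigma>\<close> on \<open>s\<close>
  repairs this: adding \<open>e\<close> to \<open>s\<close> creates one inversion for each \<open>x \<in> s\<close> that \<open>\<sigma>\<close> moves to
  the other side of \<open>e\<close>, which has the parity of
  \<open>#{x \<in> s. x < e} - #{x \<in> s. \<sigma> x < \<sigma> e}\<close>.\<close>

definition inversions :: "('a::linorder \<Rightarrow> 'b::linorder) \<Rightarrow> 'a set \<Rightarrow> ('a \<times> 'a) set" where
  "inversions \<sigma> s = {(a, b). a \<in> s \<and> b \<in> s \<and> a < b \<and> \<sigma> b < \<sigma> a}"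

definition inversion_sign :: "('a::linorder \<Rightarrow> 'b::linorder) \<Rightarrow> 'a set \<Rightarrow> int" where
  "inversion_sign \<sigma> s = (-1) ^ card (inversions \<sigma> s)"

lemma inversion_sign_squared: "inversion_sign \<sigma> s * inversion_sign \<sigma> s = 1"
  unfolding inversion_sign_def by (simp flip: power_mult_distrib)

lemma inversion_sign_nonzero: "inversion_sign \<sigma> s \<noteq> 0"
  unfolding inversion_sign_def by simp

lemma finite_inversions: "finite s \<Longrightarrow> finite (inversions \<sigma> s)"
  unfolding inversions_def by (rule finite_subset[of _ "s \<times> s"]) auto

lemma card_inversions_insert:
  assumes "finite s" and "e \<notin> s"
  shows "card (inversions \<sigma> (insert e s)) = card (inversions \<sigma> s)
           + card {a \<in> s. a < e \<and> \<sigma> e < \<sigma> a} + card {b \<in> s. e < b \<and> \<sigma> b < \<sigma> e}"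
proof -
  let ?A = "(\<lambda>a. (a, e)) ` {a \<in> s. a < e \<and> \<sigma> e < \<sigma> a}"
  let ?B = "(\<lambda>b. (e, b)) ` {b \<in> s. e < b \<and> \<sigma> b < \<sigma> e}"
  have "inversions \<sigma> (insert e s) = inversions \<sigma> s \<union> (?A \<union> ?B)"
    unfolding inversions_def by auto
  moreover have "inversions \<sigma> s \<inter> (?A \<union> ?B) = {}" and "?A \<inter> ?B = {}"
    unfolding inversions_def using \<open>e \<notin> s\<close> by auto
  ultimately show ?thesis
    using \<open>finite s\<close>
    by (simp add: card_Un_disjoint finite_inversions card_image inj_on_def)
qed

lemma card_image_less:
  fixes \<sigma> :: "'a::linorder \<Rightarrow> 'b::linorder"
  assumes "finite s" and "e \<notin> s" and "inj_on \<sigma> (insert e s)"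
  shows "card {x \<in> \<sigma> ` s. x < \<sigma> e}
           = card {a \<in> s. a < e \<and> \<sigma> a < \<sigma> e} + card {b \<in> s. e < b \<and> \<sigma> b < \<sigma> e}"
proof -
  have "{x \<in> \<sigma> ` s. x < \<sigma> e} = \<sigma> ` {a \<in> s. \<sigma> a < \<sigma> e}"
    by blast
  then have "card {x \<in> \<sigma> ` s. x < \<sigma> e} = card {a \<in> s. \<sigma> a < \<sigma> e}"
    by (auto intro!: card_image inj_on_subset[OF \<open>inj_on \<sigma> (insert e s)\<close>])
  also have "{a \<in> s. \<sigma> a < \<sigma> e} = {a \<in> s. a < e \<and> \<sigma> a < \<sigma> e} \<union> {b \<in> s. e < b \<and> \<sigma> b < \<sigma> e}"
    using \<open>e \<notin> s\<close> by (auto simp: not_less le_less)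
  finally show ?thesis
    using \<open>finite s\<close> by (subst (asm) card_Un_disjoint) auto
qed

lemma card_less_split:
  fixes \<sigma> :: "'a::linorder \<Rightarrow> 'b::linorder"
  assumes "finite s" and "e \<notin> s" and "inj_on \<sigma> (insert e s)"
  shows "card {x \<in> s. x < e} = card {a \<in> s. a < e \<and> \<sigma> e < \<sigma> a} + card {a \<in> s. a < e \<and> \<sigma> a < \<sigma> e}"
proof -
  have "\<sigma> e \<noteq> \<sigma> a" if "a \<in> s" for a
    using assms that by (metis inj_on_contraD insertCI)
  then have "card {x \<in> s. x < e}
      = card ({a \<in> s. a < e \<and> \<sigma> e < \<sigma> a} \<union> {a \<in> s. a < e \<and> \<sigma> a < \<sigma> e})"
    by (intro arg_cong[where f = card]) (auto simp: not_less le_less)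
  also have "\<dots> = card {a \<in> s. a < e \<and> \<sigma> e < \<sigma> a} + card {a \<in> s. a < e \<and> \<sigma> a < \<sigma> e}"
    using \<open>finite s\<close> by (intro card_Un_disjoint) auto
  finally show ?thesis .
qed

lemma inversion_sign_insert:
  assumes "finite s" and "e \<notin> s" and "inj_on \<sigma> (insert e s)"
  shows "inversion_sign \<sigma> (insert e s) * (-1) ^ card {x \<in> s. x < e}
           = inversion_sign \<sigma> s * (-1) ^ card {x \<in> \<sigma> ` s. x < \<sigma> e}"
  unfolding inversion_sign_def card_inversions_insert[OF assms(1,2)]
    card_less_split[OF assms] card_image_less[OF assms]
  by (simp add: power_add flip: power_mult)

lemma fst_Se: "Se V ends S e = Some U \<Longrightarrow> fst U = insert e (fst S)"
  unfolding Se_def Let_def by (auto split: if_splits option.splits)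

lemma states_edges_subset: "S \<in> states V ends n \<Longrightarrow> fst S \<subseteq> {1..n}"
  unfolding states_def by auto

definition relabel_state :: "(nat \<Rightarrow> nat) \<Rightarrow> 'v estate \<Rightarrow> 'v estate" where
  "relabel_state \<sigma> S = (\<sigma> ` fst S, snd S)"

definition relabel_chain :: "(nat \<Rightarrow> nat) \<Rightarrow> ('v estate \<Rightarrow> int) \<Rightarrow> 'v estate \<Rightarrow> int" where
  "relabel_chain \<sigma> f T =
     inversion_sign \<sigma> (fst (relabel_state (inv \<sigma>) T)) * f (relabel_state (inv \<sigma>) T)"

lemma relabel_state_inv_relabel_state [simp]:
  "bij \<sigma> \<Longrightarrow> relabel_state (inv \<sigma>) (relabel_state \<sigma> S) = S"
  unfolding relabel_state_def by (simp add: image_comp bij_is_inj)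

lemma relabel_state_relabel_state_inv [simp]:
  "bij \<sigma> \<Longrightarrow> relabel_state \<sigma> (relabel_state (inv \<sigma>) T) = T"
  unfolding relabel_state_def by (simp add: image_comp bij_is_surj surj_f_inv_f)

lemma relabel_state_eq_iff:
  "bij \<sigma> \<Longrightarrow> relabel_state \<sigma> S = T \<longleftrightarrow> S = relabel_state (inv \<sigma>) T"
  by auto

lemma ideg_relabel_state: "inj \<sigma> \<Longrightarrow> ideg (relabel_state \<sigma> S) = ideg S"
  unfolding ideg_def relabel_state_def by (simp add: card_image inj_on_subset)

lemma relabel_chain_relabel_state:
  "bij \<sigma> \<Longrightarrow> relabel_chain \<sigma> f (relabel_state \<sigma> S) = inversion_sign \<sigma> (fst S) * f S"
  unfolding relabel_chain_def by simp

lemma relabel_chain_add: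
  "relabel_chain \<sigma> (\<lambda>S. f S + g S) = (\<lambda>T. relabel_chain \<sigma> f T + relabel_chain \<sigma> g T)"
  unfolding relabel_chain_def by (simp add: algebra_simps)

lemma inj_relabel_chain: "bij \<sigma> \<Longrightarrow> inj (relabel_chain \<sigma>)"
proof (rule injI)
  fix f g assume "bij \<sigma>" and eq: "relabel_chain \<sigma> f = relabel_chain \<sigma> g"
  show "f = g"
  proof
    fix S
    have "inversion_sign \<sigma> (fst S) * f S = inversion_sign \<sigma> (fst S) * g S"
      by (simp flip: relabel_chain_relabel_state[OF \<open>bij \<sigma>\<close>] add: eq)
    then show "f S = g S"
      by (simp add: inversion_sign_nonzero)
  qed
qed

lemma relabel_chain_image_support:
  fixes Q P :: "'v estate \<Rightarrow> bool"
  assumes "bij \<sigma>" and Q_iff_P: "\<And>S. Q (relabel_state \<sigma> S) \<longleftrightarrow> P S"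
  shows "relabel_chain \<sigma> ` {f. \<forall>S. f S \<noteq> 0 \<longrightarrow> P S} = {g. \<forall>T. g T \<noteq> 0 \<longrightarrow> Q T}"
proof (intro equalityI subsetI)
  fix g assume "g \<in> relabel_chain \<sigma> ` {f. \<forall>S. f S \<noteq> 0 \<longrightarrow> P S}"
  then obtain f where f: "\<forall>S. f S \<noteq> 0 \<longrightarrow> P S" and g: "g = relabel_chain \<sigma> f"
    by blast
  have "Q T" if "g T \<noteq> 0" for T
  proof -
    have "f (relabel_state (inv \<sigma>) T) \<noteq> 0"
      using that by (simp add: g relabel_chain_def)
    with f have "P (relabel_state (inv \<sigma>) T)"
      by blast
    then show ?thesis
      using Q_iff_P[of "relabel_state (inv \<sigma>) T"] \<open>bij \<sigma>\<close> by simp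
  qed
  then show "g \<in> {g. \<forall>T. g T \<noteq> 0 \<longrightarrow> Q T}"
    by blast
next
  fix g :: "'v estate \<Rightarrow> int"
  assume g: "g \<in> {g. \<forall>T. g T \<noteq> 0 \<longrightarrow> Q T}"
  define f where "f S = inversion_sign \<sigma> (fst S) * g (relabel_state \<sigma> S)" for S
  have "relabel_chain \<sigma> f = g"
  proof
    fix T
    show "relabel_chain \<sigma> f T = g T"
      using \<open>bij \<sigma>\<close>
      by (simp add: relabel_chain_def f_def mult.assoc[symmetric] inversion_sign_squared)
  qed
  moreover have "\<forall>S. f S \<noteq> 0 \<longrightarrow> P S"
    using g by (simp add: f_def flip: Q_iff_P del: split_paired_All)
  ultimately show "g \<in> relabel_chain \<sigma> ` {f. \<forall>S. f S \<noteq> 0 \<longrightarrow> P S}"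
    by blast
qed

context
  fixes n :: nat and \<sigma> :: "nat \<Rightarrow> nat"
  assumes \<sigma>_permutes: "\<sigma> permutes {1..n}"
begin

lemma bij_\<sigma>: "bij \<sigma>"
  using \<sigma>_permutes by (rule permutes_bij)

lemma relabel_apply_permuted: "e \<in> {1..n} \<Longrightarrow> relabel n \<sigma> ends (\<sigma> e) = ends e"
  unfolding relabel_def comp_def
  by (subst inv_into_f_f[OF inj_on_subset[OF bij_is_inj[OF bij_\<sigma>] subset_UNIV]]) auto

lemma edge_rel_relabel:
  assumes "s \<subseteq> {1..n}"
  shows "edge_rel (relabel n \<sigma> ends) (\<sigma> ` s) = edge_rel ends s"
proof -
  have "edge_rel (relabel n \<sigma> ends) (\<sigma> ` s) = (\<lambda>e. relabel n \<sigma> ends (\<sigma> e)) ` s"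
    unfolding edge_rel_def by blast
  also have "\<dots> = ends ` s"
    using assms by (intro image_cong refl relabel_apply_permuted) auto
  finally show ?thesis
    unfolding edge_rel_def by blast
qed

lemma comps_relabel:
  "s \<subseteq> {1..n} \<Longrightarrow> comps V (relabel n \<sigma> ends) (\<sigma> ` s) = comps V ends s"
  unfolding comps_def conn_def by (simp add: edge_rel_relabel)

lemma conn_relabel:
  "s \<subseteq> {1..n} \<Longrightarrow> conn V (relabel n \<sigma> ends) (\<sigma> ` s) = conn V ends s"
  unfolding conn_def by (simp add: edge_rel_relabel)

lemma image_subset_edges_iff: "\<sigma> ` s \<subseteq> {1..n} \<longleftrightarrow> s \<subseteq> {1..n}"
  using permutes_image[OF \<sigma>_permutes] inj_image_subset_iff[OF bij_is_inj[OF bij_\<sigma>], of s "{1..n}"]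
  by simp

lemma relabel_state_in_states_iff:
  "relabel_state \<sigma> S \<in> states V (relabel n \<sigma> ends) n \<longleftrightarrow> S \<in> states V ends n"
proof (cases "fst S \<subseteq> {1..n}")
  case True
  then show ?thesis
    using image_subset_edges_iff by (simp add: states_def relabel_state_def comps_relabel split_beta)
next
  case False
  then show ?thesis
    using image_subset_edges_iff by (simp add: states_def relabel_state_def split_beta)
qed

lemma jdeg_relabel_state:
  "fst S \<subseteq> {1..n} \<Longrightarrow> jdeg V (relabel n \<sigma> ends) (relabel_state \<sigma> S) = jdeg V ends S"
  unfolding jdeg_def relabel_state_def by (simp add: comps_relabel)

lemma Se_relabel:
  assumes "e \<in> {1..n}" and "fst S \<subseteq> {1..n}"
  shows "Se V (relabel n \<sigma> ends) (relabel_state \<sigma> S) (\<sigma> e) = map_option (relabel_state \<sigma>) (Se V ends S e)"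
proof -
  have edges: "insert e (fst S) \<subseteq> {1..n}"
    using assms by simp
  have image_insert_edge: "insert (\<sigma> e) (\<sigma> ` fst S) = \<sigma> ` insert e (fst S)"
    by simp
  show ?thesis
    unfolding Se_def Let_def relabel_state_def fst_conv snd_conv image_insert_edge
      comps_relabel[OF edges] conn_relabel[OF assms(2)] relabel_apply_permuted[OF assms(1)]
    by (auto split: option.splits)
qed

lemma bij_betw_relabel_state:
  "bij_betw (relabel_state \<sigma>) (states V ends n) (states V (relabel n \<sigma> ends) n)"
proof -
  have "relabel_state (inv \<sigma>) T \<in> states V ends n" if "T \<in> states V (relabel n \<sigma> ends) n" for T
    using that bij_\<sigma> relabel_state_in_states_iff[of "relabel_state (inv \<sigma>) T"] by simp
  moreover have "relabel_state \<sigma> S \<in> states V (relabel n \<sigma> ends) n" if "S \<in> states V ends n" for S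
    using that relabel_state_in_states_iff by blast
  ultimately show ?thesis
    using bij_\<sigma> by (intro bij_betw_byWitness[where f' = "relabel_state (inv \<sigma>)"]) auto
qed

lemma relabel_chain_image_chains:
  "relabel_chain \<sigma> ` chains V ends n i = chains V (relabel n \<sigma> ends) n i"
  unfolding chains_def using bij_\<sigma>
  by (intro relabel_chain_image_support)
    (simp_all add: relabel_state_in_states_iff ideg_relabel_state bij_is_inj)

lemma relabel_chain_image_chains_ij:
  "relabel_chain \<sigma> ` chains_ij V ends n i j = chains_ij V (relabel n \<sigma> ends) n i j"
  unfolding chains_ij_def
proof (intro relabel_chain_image_support[OF bij_\<sigma>])
  fix S
  show "(relabel_state \<sigma> S \<in> states V (relabel n \<sigma> ends) n \<and> ideg (relabel_state \<sigma> S) = i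
          \<and> jdeg V (relabel n \<sigma> ends) (relabel_state \<sigma> S) = j)
        \<longleftrightarrow> (S \<in> states V ends n \<and> ideg S = i \<and> jdeg V ends S = j)"
    using jdeg_relabel_state[OF states_edges_subset, of S V ends] relabel_state_in_states_iff[of S V ends]
      ideg_relabel_state[OF bij_is_inj[OF bij_\<sigma>], of S]
    by auto
qed

lemma bij_betw_relabel_chain:
  "bij_betw (relabel_chain \<sigma>) (chains V ends n i) (chains V (relabel n \<sigma> ends) n i)"
  unfolding bij_betw_def
  using inj_on_subset[OF inj_relabel_chain[OF bij_\<sigma>] subset_UNIV] relabel_chain_image_chains
  by blast

lemma dmap_reindex_relabel_state:
  "dmap V (relabel n \<sigma> ends) n g (relabel_state \<sigma> U) =
    (\<Sum>S\<in>states V ends n. \<Sum>e\<in>{1..n} - fst S.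
       if Se V (relabel n \<sigma> ends) (relabel_state \<sigma> S) (\<sigma> e) = Some (relabel_state \<sigma> U)
       then (-1) ^ card {x \<in> \<sigma> ` fst S. x < \<sigma> e} * g (relabel_state \<sigma> S) else 0)"
proof -
  have free_edges: "{1..n} - \<sigma> ` s = \<sigma> ` ({1..n} - s)" for s
    using permutes_image[OF \<sigma>_permutes] bij_is_inj[OF bij_\<sigma>] by (simp add: image_set_diff)
  have "dmap V (relabel n \<sigma> ends) n g (relabel_state \<sigma> U) =
    (\<Sum>S\<in>states V ends n. \<Sum>e\<in>{1..n} - fst (relabel_state \<sigma> S).
       if Se V (relabel n \<sigma> ends) (relabel_state \<sigma> S) e = Some (relabel_state \<sigma> U)
       then (-1) ^ card {x \<in> fst (relabel_state \<sigma> S). x < e} * g (relabel_state \<sigma> S) else 0)"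
    unfolding dmap_def by (rule sum.reindex_bij_betw[OF bij_betw_relabel_state, symmetric])
  also have "\<dots> =
    (\<Sum>S\<in>states V ends n. \<Sum>e\<in>{1..n} - fst S.
       if Se V (relabel n \<sigma> ends) (relabel_state \<sigma> S) (\<sigma> e) = Some (relabel_state \<sigma> U)
       then (-1) ^ card {x \<in> \<sigma> ` fst S. x < \<sigma> e} * g (relabel_state \<sigma> S) else 0)"
    unfolding relabel_state_def fst_conv free_edges
    using bij_is_inj[OF bij_\<sigma>] by (simp add: sum.reindex inj_on_subset)
  finally show ?thesis .
qed

lemma dmap_summand_relabel_state:
  assumes S: "S \<in> states V ends n" and e: "e \<in> {1..n} - fst S"
  shows "(if Se V (relabel n \<sigma> ends) (relabel_state \<sigma> S) (\<sigma> e) = Some (relabel_state \<sigma> U)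
          then (-1) ^ card {x \<in> \<sigma> ` fst S. x < \<sigma> e} * (inversion_sign \<sigma> (fst S) * f S) else 0)
       = inversion_sign \<sigma> (fst U) *
         (if Se V ends S e = Some U then (-1) ^ card {x \<in> fst S. x < e} * f S else 0)"
proof -
  have edges: "fst S \<subseteq> {1..n}"
    using S by (rule states_edges_subset)
  have Se_iff: "Se V (relabel n \<sigma> ends) (relabel_state \<sigma> S) (\<sigma> e) = Some (relabel_state \<sigma> U)
      \<longleftrightarrow> Se V ends S e = Some U"
    using e edges bij_\<sigma> by (cases "Se V ends S e") (auto simp: Se_relabel relabel_state_eq_iff)
  show ?thesis
  proof (cases "Se V ends S e = Some U")
    case True
    then have "fst U = insert e (fst S)"
      by (rule fst_Se)
    moreover have "inversion_sign \<sigma> (insert e (fst S)) * (-1) ^ card {x \<in> fst S. x < e}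
        = inversion_sign \<sigma> (fst S) * (-1) ^ card {x \<in> \<sigma> ` fst S. x < \<sigma> e}"
      using e finite_subset[OF edges]
      by (intro inversion_sign_insert inj_on_subset[OF bij_is_inj[OF bij_\<sigma>] subset_UNIV]) auto
    ultimately show ?thesis
      using True Se_iff by (simp add: ac_simps)
  next
    case False
    then show ?thesis
      using Se_iff by simp
  qed
qed

lemma dmap_relabel_chain_relabel_state:
  "dmap V (relabel n \<sigma> ends) n (relabel_chain \<sigma> f) (relabel_state \<sigma> U)
     = inversion_sign \<sigma> (fst U) * dmap V ends n f U"
proof -
  have "dmap V (relabel n \<sigma> ends) n (relabel_chain \<sigma> f) (relabel_state \<sigma> U) =
    (\<Sum>S\<in>states V ends n. \<Sum>e\<in>{1..n} - fst S.
       if Se V (relabel n \<sigma> ends) (relabel_state \<sigma> S) (\<sigma> e) = Some (relabel_state \<sigma> U)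
       then (-1) ^ card {x \<in> \<sigma> ` fst S. x < \<sigma> e} * (inversion_sign \<sigma> (fst S) * f S) else 0)"
    unfolding dmap_reindex_relabel_state relabel_chain_relabel_state[OF bij_\<sigma>] ..
  also have "\<dots> = (\<Sum>S\<in>states V ends n. \<Sum>e\<in>{1..n} - fst S. inversion_sign \<sigma> (fst U) *
       (if Se V ends S e = Some U then (-1) ^ card {x \<in> fst S. x < e} * f S else 0))"
    by (intro sum.cong refl dmap_summand_relabel_state)
  also have "\<dots> = inversion_sign \<sigma> (fst U) * dmap V ends n f U"
    by (simp add: dmap_def sum_distrib_left)
  finally show ?thesis .
qed

lemma dmap_relabel_chain:
  fixes V :: "'v set"
  shows "relabel_chain \<sigma> (dmap V ends n f) = dmap V (relabel n \<sigma> ends) n (relabel_chain \<sigma> f)"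
proof
  fix T :: "'v estate"
  obtain U where T: "T = relabel_state \<sigma> U"
    using relabel_state_relabel_state_inv[OF bij_\<sigma>] by metis
  show "relabel_chain \<sigma> (dmap V ends n f) T = dmap V (relabel n \<sigma> ends) n (relabel_chain \<sigma> f) T"
    unfolding T by (simp add: bij_\<sigma> relabel_chain_relabel_state dmap_relabel_chain_relabel_state)
qed

end

theorem mainTheorem3:
  fixes V :: "'v set" and ends :: "nat \<Rightarrow> 'v \<times> 'v" and n :: nat and \<sigma> :: "nat \<Rightarrow> nat"
  assumes "finite V"
    and "\<forall>e\<in>{1..n}. fst (ends e) \<in> V \<and> snd (ends e) \<in> V"
    and "\<sigma> permutes {1..n}"
  shows "\<exists>\<phi> :: nat \<Rightarrow> ('v estate \<Rightarrow> int) \<Rightarrow> ('v estate \<Rightarrow> int).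
     \<forall>i. bij_betw (\<phi> i) (chains V ends n i) (chains V (relabel n \<sigma> ends) n i)
       \<and> (\<forall>f\<in>chains V ends n i. \<forall>g\<in>chains V ends n i.
             \<phi> i (\<lambda>S. f S + g S) = (\<lambda>T. \<phi> i f T + \<phi> i g T))
       \<and> (\<forall>j. \<phi> i ` chains_ij V ends n i j = chains_ij V (relabel n \<sigma> ends) n i j)
       \<and> (\<forall>f\<in>chains V ends n i.
             \<phi> (Suc i) (dmap V ends n f) = dmap V (relabel n \<sigma> ends) n (\<phi> i f))"
  using assms(3)
  by (intro exI[of _ "\<lambda>_. relabel_chain \<sigma>"] allI conjI ballI)
    (simp_all add: bij_betw_relabel_chain relabel_chain_add relabel_chain_image_chains_ij
      dmap_relabel_chain)

end
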